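(* Let $n\ge 1$, $N=2n+1$, and let $H_N$ be the simply connected $(2n+1)$-dimensional Heisenberg group, whose Lie algebra $\mathfrak{n}$ has a basis $F_1,\dots,F_{2n},F_N$ with the only nonzero brackets $[F_i,F_{j+n}]=\delta_{ij}F_N$ for $1\le i,j\le n$ (so $[F_i,F_j]=[F_i,F_N]=[F_{i+n},F_{j+n}]=[F_{i+n},F_N]=0$). Let $g_2$ be the left-invariant Lorentzian metric with $g_2(F_1,F_1)=\cdots=g_2(F_{2n},F_{2n})=-g_2(F_N,F_N)=1$ and all other pairings of basis vectors equal to $0$. Then $g_2$ is a nilsoliton, and $(\mathfrak{n},g_2)$ admits a metric solvable extension which is an Einstein metric.
   Context: For a simply connected Lie group $G$ with Lie algebra $\mathfrak{g}$ and left-invariant pseudo-Riemannian metric $g$, $g$ is an algebraic Ricci soliton if $\mathrm{ric}=c\,\mathrm{Id}+D$ for some $c\in\mathbb{R}$ and some derivation $D$ of $\mathfrak{g}$, where $\mathrm{ric}$ is the Ricci operator ($g(\mathrm{ric}X,Y)=\mathrm{Ric}(X,Y)$); it is called a nilsoliton if $G$ is nilpotent and a solvsoliton if $G$ is solvable. A metric solvable extension of $(\mathfrak{n},g)$ is a solvable Lie algebra $\mathfrak{s}=\mathfrak{a}\oplus\mathfrak{n}$ (as vector spaces) with Lie bracket $[\cdot,\cdot]'$ and a pseudo-Riemannian inner product $\tilde g$ on $\mathfrak{s}$ such that $[\mathfrak{s},\mathfrak{s}]'=\mathfrak{n}=\mathfrak{a}^{\perp}$ (orthogonal complement w.r.t.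 $\tilde g$), $[X,Y]'=[X,Y]$ and $\tilde g(X,Y)=g(X,Y)$ for all $X,Y\in\mathfrak{n}$. Such an extension is Einstein if the corresponding left-invariant metric satisfies $\mathrm{Ric}(\tilde g)=\kappa\tilde g$ for a constant $\kappa$. *)

theory Defs
  imports Complex_Main
begin

text \<open>Finite-dimensional real Lie algebras with a fixed basis e_0,...,e_(d-1).
  Vectors are coordinate functions nat => real vanishing from index d on.
  A Lie bracket is given by structure constants C i j k ([e_i,e_j] = sum_k C i j k e_k),
  a bilinear form by its Gram matrix G i j = g(e_i,e_j).\<close>

type_synonym vec = "nat \<Rightarrow> real"

definition vsp :: "nat \<Rightarrow> vec set" where
  "vsp d = {v. \<forall>k\<ge>d. v k = 0}"

definition zvec :: vec where "zvec = (\<lambda>_. 0)"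

definition ev :: "nat \<Rightarrow> vec" where
  "ev i = (\<lambda>k. if k = i then 1 else 0)"

definition vadd :: "vec \<Rightarrow> vec \<Rightarrow> vec" where
  "vadd x y = (\<lambda>k. x k + y k)"

definition lbr :: "nat \<Rightarrow> (nat \<Rightarrow> nat \<Rightarrow> nat \<Rightarrow> real) \<Rightarrow> vec \<Rightarrow> vec \<Rightarrow> vec" where
  "lbr d C x y = (\<lambda>k. if k < d then (\<Sum>i<d. \<Sum>j<d. x i * y j * C i j k) else 0)"

definition bil :: "nat \<Rightarrow> (nat \<Rightarrow> nat \<Rightarrow> real) \<Rightarrow> vec \<Rightarrow> vec \<Rightarrow> real" where
  "bil d G x y = (\<Sum>i<d. \<Sum>j<d. x i * G i j * y j)"

definition mat_app :: "nat \<Rightarrow> (nat \<Rightarrow> nat \<Rightarrow> real) \<Rightarrow> vec \<Rightarrow> vec" where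
  "mat_app d M x = (\<lambda>k. if k < d then (\<Sum>j<d. M k j * x j) else 0)"

definition is_lie_algebra :: "nat \<Rightarrow> (nat \<Rightarrow> nat \<Rightarrow> nat \<Rightarrow> real) \<Rightarrow> bool" where
  "is_lie_algebra d C \<longleftrightarrow>
     (\<forall>x\<in>vsp d. lbr d C x x = zvec) \<and>
     (\<forall>x\<in>vsp d. \<forall>y\<in>vsp d. \<forall>z\<in>vsp d.
        vadd (vadd (lbr d C x (lbr d C y z)) (lbr d C y (lbr d C z x))) (lbr d C z (lbr d C x y)) = zvec)"

definition pseudo_inner :: "nat \<Rightarrow> (nat \<Rightarrow> nat \<Rightarrow> real) \<Rightarrow> bool" where
  "pseudo_inner d G \<longleftrightarrow> (\<forall>i j. G i j = G j i) \<and>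
     (\<forall>x\<in>vsp d. (\<forall>y\<in>vsp d. bil d G x y = 0) \<longrightarrow> x = zvec)"

definition brspan :: "nat \<Rightarrow> (nat \<Rightarrow> nat \<Rightarrow> nat \<Rightarrow> real) \<Rightarrow> vec set \<Rightarrow> vec set \<Rightarrow> vec set" where
  "brspan d C A B = {v. \<exists>(m::nat) (xs::nat \<Rightarrow> vec) (ys::nat \<Rightarrow> vec). (\<forall>i<m. xs i \<in> A \<and> ys i \<in> B) \<and>
       v = (\<lambda>k. \<Sum>i<m. lbr d C (xs i) (ys i) k)}"

primrec lcs :: "nat \<Rightarrow> (nat \<Rightarrow> nat \<Rightarrow> nat \<Rightarrow> real) \<Rightarrow> nat \<Rightarrow> vec set" where
  "lcs d C 0 = vsp d"
| "lcs d C (Suc k) = brspan d C (vsp d) (lcs d C k)"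

primrec dsr :: "nat \<Rightarrow> (nat \<Rightarrow> nat \<Rightarrow> nat \<Rightarrow> real) \<Rightarrow> nat \<Rightarrow> vec set" where
  "dsr d C 0 = vsp d"
| "dsr d C (Suc k) = brspan d C (dsr d C k) (dsr d C k)"

definition nilpotent_la :: "nat \<Rightarrow> (nat \<Rightarrow> nat \<Rightarrow> nat \<Rightarrow> real) \<Rightarrow> bool" where
  "nilpotent_la d C \<longleftrightarrow> (\<exists>k. lcs d C k = {zvec})"

definition solvable_la :: "nat \<Rightarrow> (nat \<Rightarrow> nat \<Rightarrow> nat \<Rightarrow> real) \<Rightarrow> bool" where
  "solvable_la d C \<longleftrightarrow> (\<exists>k. dsr d C k = {zvec})"

text \<open>Levi-Civita connection of the left-invariant metric (Koszul formula)\<close>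
definition nabla :: "nat \<Rightarrow> (nat \<Rightarrow> nat \<Rightarrow> nat \<Rightarrow> real) \<Rightarrow> (nat \<Rightarrow> nat \<Rightarrow> real) \<Rightarrow> vec \<Rightarrow> vec \<Rightarrow> vec" where
  "nabla d C G X Y = (THE v. v \<in> vsp d \<and> (\<forall>Z\<in>vsp d.
      2 * bil d G v Z = bil d G (lbr d C X Y) Z - bil d G (lbr d C Y Z) X + bil d G (lbr d C Z X) Y))"

definition curv :: "nat \<Rightarrow> (nat \<Rightarrow> nat \<Rightarrow> nat \<Rightarrow> real) \<Rightarrow> (nat \<Rightarrow> nat \<Rightarrow> real) \<Rightarrow> vec \<Rightarrow> vec \<Rightarrow> vec \<Rightarrow> vec" where
  "curv d C G X Y Z = (\<lambda>k. nabla d C G X (nabla d C G Y Z) k - nabla d C G Y (nabla d C G X Z) k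
                          - nabla d C G (lbr d C X Y) Z k)"

definition ricci :: "nat \<Rightarrow> (nat \<Rightarrow> nat \<Rightarrow> nat \<Rightarrow> real) \<Rightarrow> (nat \<Rightarrow> nat \<Rightarrow> real) \<Rightarrow> vec \<Rightarrow> vec \<Rightarrow> real" where
  "ricci d C G X Y = (\<Sum>k<d. curv d C G (ev k) X Y k)"

definition ricci_op :: "nat \<Rightarrow> (nat \<Rightarrow> nat \<Rightarrow> nat \<Rightarrow> real) \<Rightarrow> (nat \<Rightarrow> nat \<Rightarrow> real) \<Rightarrow> vec \<Rightarrow> vec" where
  "ricci_op d C G X = (THE v. v \<in> vsp d \<and> (\<forall>Y\<in>vsp d. bil d G v Y = ricci d C G X Y))"

definition is_derivation :: "nat \<Rightarrow> (nat \<Rightarrow> nat \<Rightarrow> nat \<Rightarrow> real) \<Rightarrow> (nat \<Rightarrow> nat \<Rightarrow> real) \<Rightarrow> bool" where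
  "is_derivation d C M \<longleftrightarrow> (\<forall>x\<in>vsp d. \<forall>y\<in>vsp d.
      mat_app d M (lbr d C x y) = vadd (lbr d C (mat_app d M x) y) (lbr d C x (mat_app d M y)))"

definition algebraic_ricci_soliton :: "nat \<Rightarrow> (nat \<Rightarrow> nat \<Rightarrow> nat \<Rightarrow> real) \<Rightarrow> (nat \<Rightarrow> nat \<Rightarrow> real) \<Rightarrow> bool" where
  "algebraic_ricci_soliton d C G \<longleftrightarrow> is_lie_algebra d C \<and> pseudo_inner d G \<and>
     (\<exists>c M. is_derivation d C M \<and>
        (\<forall>X\<in>vsp d. ricci_op d C G X = (\<lambda>k. c * X k + mat_app d M X k)))"

definition nilsoliton :: "nat \<Rightarrow> (nat \<Rightarrow> nat \<Rightarrow> nat \<Rightarrow> real) \<Rightarrow> (nat \<Rightarrow> nat \<Rightarrow> real) \<Rightarrow> bool" where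
  "nilsoliton d C G \<longleftrightarrow> nilpotent_la d C \<and> algebraic_ricci_soliton d C G"

definition einstein :: "nat \<Rightarrow> (nat \<Rightarrow> nat \<Rightarrow> nat \<Rightarrow> real) \<Rightarrow> (nat \<Rightarrow> nat \<Rightarrow> real) \<Rightarrow> bool" where
  "einstein d C G \<longleftrightarrow> (\<exists>\<kappa>::real. \<forall>X\<in>vsp d. \<forall>Y\<in>vsp d. ricci d C G X Y = \<kappa> * bil d G X Y)"

text \<open>Metric solvable extension s = a (+) n of (n,C,G): n = span of e_0..e_(d-1),
  a = span of e_d..e_(d+m-1); new bracket C', new inner product G'.\<close>
definition metric_solvable_extension ::
  "nat \<Rightarrow> (nat \<Rightarrow> nat \<Rightarrow> nat \<Rightarrow> real) \<Rightarrow> (nat \<Rightarrow> nat \<Rightarrow> real) \<Rightarrow>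
   nat \<Rightarrow> (nat \<Rightarrow> nat \<Rightarrow> nat \<Rightarrow> real) \<Rightarrow> (nat \<Rightarrow> nat \<Rightarrow> real) \<Rightarrow> bool" where
  "metric_solvable_extension d C G m C' G' \<longleftrightarrow>
     is_lie_algebra (d + m) C' \<and> solvable_la (d + m) C' \<and> pseudo_inner (d + m) G' \<and>
     brspan (d + m) C' (vsp (d + m)) (vsp (d + m)) = vsp d \<and>
     {x \<in> vsp (d + m). \<forall>y\<in>{v \<in> vsp (d + m). \<forall>k<d. v k = 0}. bil (d + m) G' x y = 0} = vsp d \<and>
     (\<forall>x\<in>vsp d. \<forall>y\<in>vsp d. lbr (d + m) C' x y = lbr d C x y) \<and>
     (\<forall>x\<in>vsp d. \<forall>y\<in>vsp d. bil (d + m) G' x y = bil d G x y)"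

text \<open>Heisenberg algebra of dim 2n+1: F_i = e_(i-1), F_N = e_(2n);
  [F_i, F_(i+n)] = F_N for 1 <= i <= n.\<close>
definition heis_C :: "nat \<Rightarrow> nat \<Rightarrow> nat \<Rightarrow> nat \<Rightarrow> real" where
  "heis_C n i j k = (if k = 2 * n \<and> i < n \<and> j = i + n then 1
                     else if k = 2 * n \<and> j < n \<and> i = j + n then -1 else 0)"

definition heis_g2 :: "nat \<Rightarrow> nat \<Rightarrow> nat \<Rightarrow> real" where
  "heis_g2 n i j = (if i = j \<and> i < 2 * n then 1 else if i = j \<and> i = 2 * n then -1 else 0)"

end

theory Submission
  imports Defs
begin

text \<open>With the centre timelike, the Koszul formula gives the Levi-Civita connection of \<open>g\<^sub>2\<close>
  in closed form, and tracing the curvature shows that the Ricci operator is \<open>1/2\<close> on the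
  horizontal space \<open>V\<close> and \<open>-n/2\<close> on the centre. So \<open>ric = (n+2)/2 Id + D\<close> where
  \<open>D = -(n+1) D\<^sub>0\<close> and \<open>D\<^sub>0\<close> is the derivation acting by \<open>1/2\<close> on \<open>V\<close> and by \<open>1\<close> on the centre.
  Adjoining a timelike unit vector \<open>H\<close> with \<open>ad H = D\<^sub>0\<close> gives a solvable extension whose
  connection is again explicit, and the same trace computation yields \<open>Ric = (n+2)/2 g\<close>.\<close>

section \<open>Coordinate computations in a fixed basis\<close>

lemma sum_lessThan_double:
  fixes f :: "nat \<Rightarrow> real"
  shows "(\<Sum>k<2*n. f k) = (\<Sum>i<n. f i + f (i+n))"
proof -
  have "{..<2*n} = {..<n} \<union> {n..<n+n}" by auto
  then have "(\<Sum>k<2*n. f k) = sum f {..<n} + sum f {0+n..<n+n}"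
    by (simp add: sum.union_disjoint ivl_disj_int)
  also have "sum f {0+n..<n+n} = (\<Sum>i<n. f (i+n))"
    by (simp only: sum.shift_bounds_nat_ivl atLeast0LessThan)
  finally show ?thesis by (simp add: sum.distrib)
qed

lemma ev_same [simp]: "ev k k = 1"
  and ev_other [simp]: "j \<noteq> k \<Longrightarrow> ev k j = 0"
  by (simp_all add: ev_def)

lemma ev_vsp: "k < d \<Longrightarrow> ev k \<in> vsp d"
  by (simp add: vsp_def ev_def)

lemma lbr_vsp: "lbr d C x y \<in> vsp d"
  by (simp add: vsp_def lbr_def)

lemma bil_diag:
  assumes "\<And>i j. i \<noteq> j \<Longrightarrow> G i j = 0"
  shows "bil d G x y = (\<Sum>i<d. x i * G i i * y i)"
  unfolding bil_def
proof (rule sum.cong[OF refl])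
  fix i
  have "(\<Sum>j<d. x i * G i j * y j) = (\<Sum>j<d. if j = i then x i * G i i * y i else 0)"
    by (rule sum.cong) (use assms in auto)
  then show "(\<Sum>j<d. x i * G i j * y j) = x i * G i i * y i" if "i \<in> {..<d}"
    using that by simp
qed

lemma pseudo_inner_diag:
  assumes "\<And>i j. i \<noteq> j \<Longrightarrow> G i j = 0" "\<And>i j. G i j = G j i" "\<And>i. i < d \<Longrightarrow> G i i \<noteq> 0"
  shows "pseudo_inner d G"
  unfolding pseudo_inner_def
proof (intro conjI allI ballI impI assms(2))
  fix x assume x: "x \<in> vsp d" and orth: "\<forall>y\<in>vsp d. bil d G x y = 0"
  have "x k = 0" for k
  proof (cases "k < d")
    case True
    have "0 = bil d G x (ev k)" using orth ev_vsp[OF True] by simp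
    also have "\<dots> = (\<Sum>i<d. if i = k then x k * G k k else 0)"
      using bil_diag[of G d x "ev k", OF assms(1)] by (simp add: ev_def if_distrib cong: if_cong)
    also have "\<dots> = x k * G k k" using True by simp
    finally show ?thesis using assms(3)[OF True] by simp
  qed (use x in \<open>simp add: vsp_def\<close>)
  then show "x = zvec" by (simp add: zvec_def fun_eq_iff)
qed

lemma pseudo_inner_eq:
  assumes G: "pseudo_inner d G" and "v \<in> vsp d" "w \<in> vsp d"
    and "\<And>Z. Z \<in> vsp d \<Longrightarrow> bil d G v Z = bil d G w Z"
  shows "v = w"
proof -
  have "(\<lambda>k. v k - w k) \<in> vsp d" using assms(2,3) by (simp add: vsp_def)
  moreover have "bil d G (\<lambda>k. v k - w k) Z = 0" if "Z \<in> vsp d" for Z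
    using assms(4)[OF that] unfolding bil_def by (simp add: algebra_simps sum_subtractf)
  ultimately have "(\<lambda>k. v k - w k) = zvec" using G unfolding pseudo_inner_def by blast
  then show ?thesis by (simp add: zvec_def fun_eq_iff)
qed

lemma nabla_eqI:
  assumes G: "pseudo_inner d G" and v: "v \<in> vsp d"
    and koszul: "\<And>Z. Z \<in> vsp d \<Longrightarrow> 2 * bil d G v Z =
      bil d G (lbr d C X Y) Z - bil d G (lbr d C Y Z) X + bil d G (lbr d C Z X) Y"
  shows "nabla d C G X Y = v"
  unfolding nabla_def
proof (rule the_equality)
  fix w assume "w \<in> vsp d \<and> (\<forall>Z\<in>vsp d. 2 * bil d G w Z =
      bil d G (lbr d C X Y) Z - bil d G (lbr d C Y Z) X + bil d G (lbr d C Z X) Y)"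
  then show "w = v" using pseudo_inner_eq[OF G _ v] koszul by force
qed (use v koszul in blast)

lemma ricci_op_eqI:
  assumes G: "pseudo_inner d G" and v: "v \<in> vsp d"
    and "\<And>Y. Y \<in> vsp d \<Longrightarrow> bil d G v Y = ricci d C G X Y"
  shows "ricci_op d C G X = v"
  unfolding ricci_op_def
proof (rule the_equality)
  fix w assume "w \<in> vsp d \<and> (\<forall>Y\<in>vsp d. bil d G w Y = ricci d C G X Y)"
  then show "w = v" using pseudo_inner_eq[OF G _ v] assms(3) by force
qed (use assms in blast)

lemma ricci_via_connection:
  assumes nabla: "\<And>X Y. X \<in> vsp d \<Longrightarrow> Y \<in> vsp d \<Longrightarrow> nabla d C G X Y = N X Y"
    and N_vsp: "\<And>X Y. N X Y \<in> vsp d"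
    and "X \<in> vsp d" "Y \<in> vsp d"
  shows "ricci d C G X Y =
    (\<Sum>k<d. N (ev k) (N X Y) k - N X (N (ev k) Y) k - N (lbr d C (ev k) X) Y k)"
  unfolding ricci_def curv_def
  using assms by (intro sum.cong) (simp_all add: ev_vsp lbr_vsp)

definition diag_mat :: "(nat \<Rightarrow> real) \<Rightarrow> nat \<Rightarrow> nat \<Rightarrow> real" where
  "diag_mat w i j = (if i = j then w i else 0)"

lemma mat_app_diag: "mat_app d (diag_mat w) x = (\<lambda>k. if k < d then w k * x k else 0)"
proof
  fix k
  have "(\<Sum>j<d. diag_mat w k j * x j) = (\<Sum>j<d. if j = k then w k * x k else 0)"
    by (rule sum.cong) (auto simp: diag_mat_def)
  then show "mat_app d (diag_mat w) x k = (if k < d then w k * x k else 0)"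
    by (simp add: mat_app_def)
qed

lemma brspan_coord_zero:
  assumes "v \<in> brspan d C A B" "\<And>a b. a \<in> A \<Longrightarrow> b \<in> B \<Longrightarrow> lbr d C a b k = 0"
  shows "v k = 0"
proof -
  obtain m :: nat and xs ys where "\<forall>i<m. xs i \<in> A \<and> ys i \<in> B"
    and "v = (\<lambda>k. \<Sum>i<m. lbr d C (xs i) (ys i) k)"
    using assms(1) unfolding brspan_def by blast
  then show ?thesis using assms(2) by (simp add: sum.neutral)
qed

lemma zvec_in_brspan: "zvec \<in> brspan d C A B"
  unfolding brspan_def by (rule CollectI, rule exI[of _ 0]) (simp add: zvec_def)

section \<open>The Heisenberg algebra with the Lorentzian metric \<open>g\<^sub>2\<close>\<close>

text \<open>Coordinates \<open>0..2n-1\<close> span the horizontal space \<open>V\<close> and coordinate \<open>2n\<close> is the centre.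
  \<open>heis_omega\<close> is the symplectic form with \<open>[X,Y] = \<omega>(X,Y) F\<^sub>N\<close>, \<open>heis_inner\<close> the Euclidean
  inner product on \<open>V\<close> and \<open>heis_J\<close> the complex structure linking them.\<close>

definition heis_omega :: "nat \<Rightarrow> vec \<Rightarrow> vec \<Rightarrow> real" where
  "heis_omega n x y = (\<Sum>i<n. x i * y (i+n) - x (i+n) * y i)"

definition heis_inner :: "nat \<Rightarrow> vec \<Rightarrow> vec \<Rightarrow> real" where
  "heis_inner n x y = (\<Sum>i<n. x i * y i + x (i+n) * y (i+n))"

definition heis_J :: "nat \<Rightarrow> vec \<Rightarrow> vec" where
  "heis_J n x = (\<lambda>k. if k < n then - x (k+n) else if k < 2*n then x (k-n) else 0)"

lemma heis_J_low [simp]: "k < n \<Longrightarrow> heis_J n x k = - x (k+n)"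
  and heis_J_high [simp]: "i < n \<Longrightarrow> heis_J n x (i+n) = x i"
  and heis_J_outside [simp]: "2*n \<le> k \<Longrightarrow> heis_J n x k = 0"
  by (simp_all add: heis_J_def)

lemma heis_omega_cong:
  "(\<And>k. k < 2*n \<Longrightarrow> x k = x' k) \<Longrightarrow> (\<And>k. k < 2*n \<Longrightarrow> y k = y' k) \<Longrightarrow>
    heis_omega n x y = heis_omega n x' y'"
  unfolding heis_omega_def by (rule sum.cong) auto

lemma heis_inner_cong:
  "(\<And>k. k < 2*n \<Longrightarrow> x k = x' k) \<Longrightarrow> (\<And>k. k < 2*n \<Longrightarrow> y k = y' k) \<Longrightarrow>
    heis_inner n x y = heis_inner n x' y'"
  unfolding heis_inner_def by (rule sum.cong) auto

lemma heis_omega_antisym: "heis_omega n x y = - heis_omega n y x"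
  unfolding heis_omega_def by (simp add: sum_negf[symmetric] algebra_simps)

lemma heis_omega_self [simp]: "heis_omega n x x = 0"
  using heis_omega_antisym[of n x x] by simp

lemma heis_inner_sym: "heis_inner n x y = heis_inner n y x"
  unfolding heis_inner_def by (simp add: algebra_simps)

lemma heis_omega_J_right: "heis_omega n x (heis_J n y) = heis_inner n x y"
  unfolding heis_omega_def heis_inner_def by (rule sum.cong) auto

lemma heis_inner_J_left: "heis_inner n (heis_J n x) y = heis_omega n x y"
  unfolding heis_omega_def heis_inner_def by (rule sum.cong) auto

lemma heis_omega_zero_left: "(\<And>k. k < 2*n \<Longrightarrow> x k = 0) \<Longrightarrow> heis_omega n x y = 0"
  and heis_omega_zero_right: "(\<And>k. k < 2*n \<Longrightarrow> y k = 0) \<Longrightarrow> heis_omega n x y = 0"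
  and heis_inner_zero_left: "(\<And>k. k < 2*n \<Longrightarrow> x k = 0) \<Longrightarrow> heis_inner n x y = 0"
  unfolding heis_omega_def heis_inner_def by (auto intro!: sum.neutral)

lemma heis_omega_linear_right:
  "heis_omega n x (\<lambda>k. a * u k + b * v k) = a * heis_omega n x u + b * heis_omega n x v"
  and heis_inner_linear_left:
  "heis_inner n (\<lambda>k. a * u k + b * v k + c * w k) y =
    a * heis_inner n u y + b * heis_inner n v y + c * heis_inner n w y"
  unfolding heis_omega_def heis_inner_def
  by (simp_all add: sum_distrib_left sum.distrib[symmetric] sum_subtractf[symmetric] algebra_simps)

lemma heis_omega_scale_left: "heis_omega n (\<lambda>k. a * u k) y = a * heis_omega n u y"
  and heis_omega_scale_right: "heis_omega n x (\<lambda>k. a * u k) = a * heis_omega n x u"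
  and heis_inner_scale_left: "heis_inner n (\<lambda>k. a * u k) y = a * heis_inner n u y"
  unfolding heis_omega_def heis_inner_def
  by (simp_all add: sum_distrib_left sum_subtractf[symmetric] algebra_simps)

lemma heis_omega_ev_low: "k < n \<Longrightarrow> heis_omega n (ev k) y = y (k+n)"
  and heis_omega_ev_high: "k < n \<Longrightarrow> heis_omega n (ev (k+n)) y = - y k"
  and heis_inner_ev_low: "k < n \<Longrightarrow> heis_inner n (ev k) y = y k"
  and heis_inner_ev_high: "k < n \<Longrightarrow> heis_inner n (ev (k+n)) y = y (k+n)"
  unfolding heis_omega_def heis_inner_def ev_def
  by (simp_all add: if_distrib[of "\<lambda>t. t * _"] sum.delta sum_negf cong: if_cong)

lemma heis_omega_ev_outside: "2*n \<le> k \<Longrightarrow> heis_omega n (ev k) y = 0"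
  and heis_inner_ev_outside: "2*n \<le> k \<Longrightarrow> heis_inner n (ev k) y = 0"
  by (simp_all add: heis_omega_zero_left heis_inner_zero_left ev_def)

lemma heis_C_sum:
  assumes "2*n \<le> d"
  shows "(\<Sum>i<d. \<Sum>j<d. x i * y j * heis_C n i j k) = (if k = 2*n then heis_omega n x y else 0)"
proof (cases "k = 2*n")
  case True
  let ?t = "\<lambda>i. (if i < n then x i * y (i+n) else 0) - (if n \<le> i \<and> i < 2*n then x i * y (i-n) else 0)"
  have inner: "(\<Sum>j<d. x i * y j * heis_C n i j k) = ?t i" for i
  proof -
    have "(\<Sum>j<d. x i * y j * heis_C n i j k) =
      (\<Sum>j<d. if j = i+n then (if i < n then x i * y (i+n) else 0) else 0) -
      (\<Sum>j<d. if j = i-n then (if n \<le> i \<and> i < 2*n then x i * y (i-n) else 0) else 0)"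
      unfolding sum_subtractf[symmetric] True heis_C_def by (rule sum.cong) auto
    then show ?thesis using assms by auto
  qed
  have "(\<Sum>i<d. ?t i) = (\<Sum>i<2*n. ?t i)"
    using assms by (intro sum.mono_neutral_right) auto
  also have "\<dots> = heis_omega n x y"
    unfolding sum_lessThan_double heis_omega_def by (rule sum.cong) auto
  finally show ?thesis using True inner by simp
qed (simp add: heis_C_def)

lemma lbr_heis: "lbr (2*n+1) (heis_C n) x y = (\<lambda>k. if k = 2*n then heis_omega n x y else 0)"
  unfolding lbr_def heis_C_sum[OF le_add1] by auto

lemma bil_heis: "bil (2*n+1) (heis_g2 n) x y = heis_inner n x y - x (2*n) * y (2*n)"
proof -
  have "bil (2*n+1) (heis_g2 n) x y = (\<Sum>i<2*n. x i * heis_g2 n i i * y i) - x (2*n) * y (2*n)"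
    by (subst bil_diag) (simp_all add: heis_g2_def)
  also have "(\<Sum>i<2*n. x i * heis_g2 n i i * y i) = heis_inner n x y"
    unfolding sum_lessThan_double heis_inner_def by (rule sum.cong) (auto simp: heis_g2_def)
  finally show ?thesis .
qed

lemma pseudo_inner_heis: "pseudo_inner (2*n+1) (heis_g2 n)"
  by (rule pseudo_inner_diag) (auto simp: heis_g2_def)

lemma lie_algebra_heis: "is_lie_algebra (2*n+1) (heis_C n)"
proof -
  have "heis_omega n x (\<lambda>k. if k = 2*n then c else 0) = 0" for x c
    by (rule heis_omega_zero_right) auto
  then show ?thesis
    unfolding is_lie_algebra_def lbr_heis by (simp add: zvec_def vadd_def fun_eq_iff)
qed

lemma nilpotent_heis: "nilpotent_la (2*n+1) (heis_C n)"
proof -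
  have central: "v k = 0" if "v \<in> lcs (2*n+1) (heis_C n) 1" "k < 2*n" for v k
  proof (rule brspan_coord_zero[of v])
    show "v \<in> brspan (2*n+1) (heis_C n) (vsp (2*n+1)) (vsp (2*n+1))"
      using that by simp
  qed (simp only: lbr_heis, use that(2) in simp)
  have "v k = 0" if "v \<in> lcs (2*n+1) (heis_C n) 2" for v k
  proof (rule brspan_coord_zero[of v])
    show "v \<in> brspan (2*n+1) (heis_C n) (vsp (2*n+1)) (lcs (2*n+1) (heis_C n) 1)"
      using that by (simp add: numeral_2_eq_2)
  qed (simp only: lbr_heis, simp add: heis_omega_zero_right central)
  then have "lcs (2*n+1) (heis_C n) 2 = {zvec}"
    using zvec_in_brspan by (auto simp: numeral_2_eq_2 zvec_def)
  then show ?thesis unfolding nilpotent_la_def by blast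
qed

text \<open>Half the grading derivation of the Heisenberg algebra.\<close>
definition heis_D :: "nat \<Rightarrow> nat \<Rightarrow> real" where
  "heis_D n k = (if k < 2*n then 1/2 else if k = 2*n then 1 else 0)"

lemma heis_D_low [simp]: "k < 2*n \<Longrightarrow> heis_D n k = 1/2"
  and heis_D_high [simp]: "i < n \<Longrightarrow> heis_D n (i+n) = 1/2"
  and heis_D_centre [simp]: "heis_D n (2*n) = 1"
  and heis_D_outside [simp]: "2*n < k \<Longrightarrow> heis_D n k = 0"
  by (simp_all add: heis_D_def)

lemma heis_omega_D_scaled:
  fixes n :: nat and c :: real
  defines "M \<equiv> diag_mat (\<lambda>k. c * heis_D n k)"
  shows "heis_omega n (mat_app (2*n+1) M x) y = c / 2 * heis_omega n x y"
    and "heis_omega n x (mat_app (2*n+1) M y) = c / 2 * heis_omega n x y"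
proof -
  have "heis_omega n (mat_app (2*n+1) M x) y = heis_omega n (\<lambda>k. c / 2 * x k) y"
    by (rule heis_omega_cong) (simp_all add: M_def mat_app_diag)
  then show "heis_omega n (mat_app (2*n+1) M x) y = c / 2 * heis_omega n x y"
    by (simp only: heis_omega_scale_left)
  have "heis_omega n x (mat_app (2*n+1) M y) = heis_omega n x (\<lambda>k. c / 2 * y k)"
    by (rule heis_omega_cong) (simp_all add: M_def mat_app_diag)
  then show "heis_omega n x (mat_app (2*n+1) M y) = c / 2 * heis_omega n x y"
    by (simp only: heis_omega_scale_right)
qed

lemma derivation_heis_D: "is_derivation (2*n+1) (heis_C n) (diag_mat (\<lambda>k. c * heis_D n k))"
  unfolding is_derivation_def lbr_heis vadd_def heis_omega_D_scaled
  by (simp add: mat_app_diag fun_eq_iff)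

definition heis_nabla :: "nat \<Rightarrow> vec \<Rightarrow> vec \<Rightarrow> vec" where
  "heis_nabla n X Y = (\<lambda>k. if k = 2*n then heis_omega n X Y / 2
     else if k < 2*n then X (2*n) * heis_J n Y k / 2 + Y (2*n) * heis_J n X k / 2 else 0)"

lemma heis_nabla_vsp: "heis_nabla n X Y \<in> vsp (2*n+1)"
  by (simp add: vsp_def heis_nabla_def)

lemma nabla_heis:
  assumes "X \<in> vsp (2*n+1)" "Y \<in> vsp (2*n+1)"
  shows "nabla (2*n+1) (heis_C n) (heis_g2 n) X Y = heis_nabla n X Y"
proof (rule nabla_eqI[OF pseudo_inner_heis heis_nabla_vsp])
  fix Z
  have "heis_inner n (heis_nabla n X Y) Z =
    heis_inner n (\<lambda>k. X (2*n) / 2 * heis_J n Y k + Y (2*n) / 2 * heis_J n X k + 0 * X k) Z"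
    by (rule heis_inner_cong) (auto simp: heis_nabla_def)
  also have "\<dots> = X (2*n) / 2 * heis_omega n Y Z + Y (2*n) / 2 * heis_omega n X Z"
    by (simp only: heis_inner_linear_left heis_inner_J_left)
  finally have "heis_inner n (heis_nabla n X Y) Z =
    X (2*n) / 2 * heis_omega n Y Z + Y (2*n) / 2 * heis_omega n X Z" .
  moreover have "heis_inner n (\<lambda>k. if k = 2*n then c else 0) W = 0" for c W
    by (rule heis_inner_zero_left) auto
  ultimately show "2 * bil (2*n+1) (heis_g2 n) (heis_nabla n X Y) Z =
     bil (2*n+1) (heis_g2 n) (lbr (2*n+1) (heis_C n) X Y) Z -
     bil (2*n+1) (heis_g2 n) (lbr (2*n+1) (heis_C n) Y Z) X +
     bil (2*n+1) (heis_g2 n) (lbr (2*n+1) (heis_C n) Z X) Y"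
    unfolding bil_heis lbr_heis using heis_omega_antisym[of n Z X]
    by (simp add: heis_nabla_def algebra_simps)
qed

lemma heis_nabla_centre: "heis_nabla n X Y (2*n) = heis_omega n X Y / 2"
  by (simp add: heis_nabla_def)

lemma heis_nabla_central_left:
  "heis_nabla n (\<lambda>j. if j = 2*n then c else 0) Y =
    (\<lambda>k. if k < 2*n then c * heis_J n Y k / 2 else 0)"
proof -
  have "heis_J n (\<lambda>j. if j = 2*n then c else 0) = (\<lambda>k. 0)"
    by (auto simp: heis_J_def fun_eq_iff)
  then show ?thesis
    by (auto simp: heis_nabla_def fun_eq_iff heis_omega_zero_left)
qed

lemma heis_nabla_ev_diag: "k \<le> 2*n \<Longrightarrow> heis_nabla n (ev k) W k = 0"
  by (cases "k < n") (auto simp: heis_nabla_def heis_J_def heis_omega_ev_outside)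

lemma heis_nabla_nabla_ev:
  "i < n \<Longrightarrow> heis_nabla n X (heis_nabla n (ev i) Y) i = - X (2*n) * Y (2*n) / 4 - X (i+n) * Y (i+n) / 4"
  "i < n \<Longrightarrow> heis_nabla n X (heis_nabla n (ev (i+n)) Y) (i+n) = - X (2*n) * Y (2*n) / 4 - X i * Y i / 4"
  "heis_nabla n X (heis_nabla n (ev (2*n)) Y) (2*n) = heis_inner n X Y / 4"
proof -
  show "i < n \<Longrightarrow> heis_nabla n X (heis_nabla n (ev i) Y) i = - X (2*n) * Y (2*n) / 4 - X (i+n) * Y (i+n) / 4"
    "i < n \<Longrightarrow> heis_nabla n X (heis_nabla n (ev (i+n)) Y) (i+n) = - X (2*n) * Y (2*n) / 4 - X i * Y i / 4"
    by (simp_all add: heis_nabla_def heis_omega_ev_low heis_omega_ev_high)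
  have "heis_omega n X (heis_nabla n (ev (2*n)) Y) = heis_omega n X (\<lambda>k. 1/2 * heis_J n Y k)"
    by (rule heis_omega_cong) (auto simp: heis_nabla_def heis_omega_ev_outside ev_def heis_J_def)
  also have "\<dots> = 1/2 * heis_inner n X Y"
    by (simp only: heis_omega_scale_right heis_omega_J_right)
  finally show "heis_nabla n X (heis_nabla n (ev (2*n)) Y) (2*n) = heis_inner n X Y / 4"
    by (simp add: heis_nabla_centre)
qed

lemma ricci_heis:
  assumes X: "X \<in> vsp (2*n+1)" and Y: "Y \<in> vsp (2*n+1)"
  shows "ricci (2*n+1) (heis_C n) (heis_g2 n) X Y =
    heis_inner n X Y / 2 + n * (X (2*n) * Y (2*n)) / 2"
proof -
  let ?N = "heis_nabla n"
  let ?T = "\<lambda>k. ?N (ev k) (?N X Y) k - ?N X (?N (ev k) Y) k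
    - ?N (\<lambda>j. if j = 2*n then heis_omega n (ev k) X else 0) Y k"
  have "ricci (2*n+1) (heis_C n) (heis_g2 n) X Y = (\<Sum>k<2*n+1. ?T k)"
    using ricci_via_connection[OF nabla_heis heis_nabla_vsp X Y] unfolding lbr_heis .
  also have "\<dots> = (\<Sum>i<n. ?T i + ?T (i+n)) + ?T (2*n)"
    by (simp add: sum_lessThan_double)
  also have "\<dots> = (\<Sum>i<n. X (2*n) * Y (2*n) / 2 + 3/4 * (X i * Y i + X (i+n) * Y (i+n)))
      - heis_inner n X Y / 4"
    by (simp add: heis_nabla_ev_diag heis_nabla_nabla_ev heis_nabla_central_left
        heis_omega_ev_low heis_omega_ev_high heis_omega_ev_outside)
      (simp add: sum.distrib sum_subtractf algebra_simps add_divide_distrib)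
  also have "\<dots> = n * (X (2*n) * Y (2*n) / 2) + 3/4 * heis_inner n X Y - heis_inner n X Y / 4"
    by (simp only: sum.distrib sum_constant card_lessThan sum_distrib_left[symmetric] heis_inner_def)
  finally show ?thesis by simp
qed

lemma ricci_op_heis:
  assumes X: "X \<in> vsp (2*n+1)"
  shows "ricci_op (2*n+1) (heis_C n) (heis_g2 n) X =
    (\<lambda>k. if k < 2*n then X k / 2 else if k = 2*n then - (real n / 2) * X (2*n) else 0)"
    (is "_ = ?R")
proof (rule ricci_op_eqI[OF pseudo_inner_heis])
  show "?R \<in> vsp (2*n+1)" by (simp add: vsp_def)
  fix Y assume Y: "Y \<in> vsp (2*n+1)"
  have "heis_inner n ?R Y = heis_inner n (\<lambda>k. 1/2 * X k) Y"
    by (rule heis_inner_cong) auto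
  then show "bil (2*n+1) (heis_g2 n) ?R Y = ricci (2*n+1) (heis_C n) (heis_g2 n) X Y"
    unfolding bil_heis ricci_heis[OF X Y] heis_inner_scale_left by simp
qed

theorem nilsoliton_heis: "nilsoliton (2*n+1) (heis_C n) (heis_g2 n)"
  unfolding nilsoliton_def algebraic_ricci_soliton_def
proof (intro conjI nilpotent_heis lie_algebra_heis pseudo_inner_heis
    exI[of _ "(real n + 2) / 2"] exI[of _ "diag_mat (\<lambda>k. - (real n + 1) * heis_D n k)"]
    derivation_heis_D ballI)
  fix X assume X: "X \<in> vsp (2*n+1)"
  have "X k = 0" if "2*n < k" for k using X that by (simp add: vsp_def)
  then show "ricci_op (2*n+1) (heis_C n) (heis_g2 n) X =
    (\<lambda>k. (real n + 2) / 2 * X k + mat_app (2*n+1) (diag_mat (\<lambda>k. - (real n + 1) * heis_D n k)) X k)"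
    unfolding ricci_op_heis[OF X] mat_app_diag by (auto simp: fun_eq_iff field_simps heis_D_def)
qed

section \<open>The Einstein solvable extension\<close>

text \<open>The extension adjoins \<open>H\<close> as coordinate \<open>2n+1\<close>, acting by \<open>ad H = heis_D\<close> on the
  Heisenberg algebra, with \<open>g(H,H) = -1\<close>.\<close>

definition ext_C :: "nat \<Rightarrow> nat \<Rightarrow> nat \<Rightarrow> nat \<Rightarrow> real" where
  "ext_C n i j k = heis_C n i j k + (if i = 2*n+1 \<and> j = k then heis_D n j else 0)
                   - (if j = 2*n+1 \<and> i = k then heis_D n i else 0)"

definition ext_g :: "nat \<Rightarrow> nat \<Rightarrow> nat \<Rightarrow> real" where
  "ext_g n i j = (if i = j \<and> i < 2*n then 1 else if i = j \<and> (i = 2*n \<or> i = 2*n+1) then -1 else 0)"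

definition ext_br :: "nat \<Rightarrow> vec \<Rightarrow> vec \<Rightarrow> vec" where
  "ext_br n x y = (\<lambda>k. (if k = 2*n then heis_omega n x y else 0)
     + x (2*n+1) * heis_D n k * y k - y (2*n+1) * heis_D n k * x k)"

lemma lbr_ext: "lbr (2*n+2) (ext_C n) x y = ext_br n x y"
proof
  fix k
  show "lbr (2*n+2) (ext_C n) x y k = ext_br n x y k"
  proof (cases "k < 2*n+2")
    case True
    have adH_left: "(\<Sum>j<2*n+2. x i * y j * (if i = 2*n+1 \<and> j = k then heis_D n j else 0)) =
       (if i = 2*n+1 then x i * y k * heis_D n k else 0)" for i
    proof -
      have "(\<Sum>j<2*n+2. x i * y j * (if i = 2*n+1 \<and> j = k then heis_D n j else 0)) =
        (\<Sum>j<2*n+2. if j = k then (if i = 2*n+1 then x i * y k * heis_D n k else 0) else 0)"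
        by (rule sum.cong) auto
      then show ?thesis using True by simp
    qed
    have adH_right: "(\<Sum>j<2*n+2. x i * y j * (if j = 2*n+1 \<and> i = k then heis_D n i else 0)) =
       (if i = k then x k * y (2*n+1) * heis_D n k else 0)" for i
    proof -
      have "(\<Sum>j<2*n+2. x i * y j * (if j = 2*n+1 \<and> i = k then heis_D n i else 0)) =
        (\<Sum>j<2*n+2. if j = 2*n+1 then (if i = k then x k * y (2*n+1) * heis_D n k else 0) else 0)"
        by (rule sum.cong) auto
      then show ?thesis by simp
    qed
    have "(\<Sum>i<2*n+2. \<Sum>j<2*n+2. x i * y j * ext_C n i j k) =
      (\<Sum>i<2*n+2. \<Sum>j<2*n+2. x i * y j * heis_C n i j k)
      + (\<Sum>i<2*n+2. \<Sum>j<2*n+2. x i * y j * (if i = 2*n+1 \<and> j = k then heis_D n j else 0))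
      - (\<Sum>i<2*n+2. \<Sum>j<2*n+2. x i * y j * (if j = 2*n+1 \<and> i = k then heis_D n i else 0))"
      unfolding ext_C_def by (simp add: algebra_simps sum.distrib sum_subtractf)
    also have "\<dots> = ext_br n x y k"
      unfolding adH_left adH_right heis_C_sum[OF le_add1] ext_br_def using True by simp
    finally show ?thesis using True unfolding lbr_def by simp
  qed (simp add: lbr_def ext_br_def)
qed

lemma ext_br_app:
  "ext_br n x y k = (if k = 2*n then heis_omega n x y else 0)
     + x (2*n+1) * heis_D n k * y k - y (2*n+1) * heis_D n k * x k"
  by (simp add: ext_br_def)

lemma ext_br_H: "ext_br n x y (2*n+1) = 0"
  by (simp add: ext_br_app)

lemma ext_br_br:
  "ext_br n x (ext_br n y z) k =
    (if k = 2*n then heis_omega n x (ext_br n y z) else 0) + x (2*n+1) * heis_D n k * ext_br n y z k"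
  unfolding ext_br_app[of n x "ext_br n y z"] ext_br_H by simp

lemma heis_omega_ext_br:
  "heis_omega n x (ext_br n y z) = y (2*n+1) / 2 * heis_omega n x z - z (2*n+1) / 2 * heis_omega n x y"
proof -
  have "heis_omega n x (ext_br n y z) =
    heis_omega n x (\<lambda>k. y (2*n+1) / 2 * z k + (- z (2*n+1) / 2) * y k)"
    by (rule heis_omega_cong) (auto simp: ext_br_app)
  then show ?thesis by (simp only: heis_omega_linear_right)
qed

lemma bil_ext:
  "bil (2*n+2) (ext_g n) x y = heis_inner n x y - x (2*n) * y (2*n) - x (2*n+1) * y (2*n+1)"
proof -
  have "bil (2*n+2) (ext_g n) x y =
    (\<Sum>i<2*n. x i * ext_g n i i * y i) - x (2*n) * y (2*n) - x (2*n+1) * y (2*n+1)"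
    by (subst bil_diag) (simp_all add: ext_g_def numeral_2_eq_2)
  also have "(\<Sum>i<2*n. x i * ext_g n i i * y i) = heis_inner n x y"
    unfolding sum_lessThan_double heis_inner_def by (rule sum.cong) (auto simp: ext_g_def)
  finally show ?thesis .
qed

lemma pseudo_inner_ext: "pseudo_inner (2*n+2) (ext_g n)"
  by (rule pseudo_inner_diag) (auto simp: ext_g_def)

lemma lbr_ext_restrict:
  "x \<in> vsp (2*n+1) \<Longrightarrow> y \<in> vsp (2*n+1) \<Longrightarrow> lbr (2*n+2) (ext_C n) x y = lbr (2*n+1) (heis_C n) x y"
  unfolding lbr_ext lbr_heis by (simp add: ext_br_app vsp_def fun_eq_iff)

lemma bil_ext_restrict:
  "x \<in> vsp (2*n+1) \<Longrightarrow> y \<in> vsp (2*n+1) \<Longrightarrow> bil (2*n+2) (ext_g n) x y = bil (2*n+1) (heis_g2 n) x y"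
  unfolding bil_ext bil_heis by (simp add: vsp_def)

lemma lie_algebra_ext: "is_lie_algebra (2*n+2) (ext_C n)"
  unfolding is_lie_algebra_def lbr_ext
proof (intro conjI ballI)
  fix x show "ext_br n x x = zvec"
    by (simp add: ext_br_app zvec_def fun_eq_iff)
next
  fix x y z
  have "ext_br n x (ext_br n y z) k + ext_br n y (ext_br n z x) k + ext_br n z (ext_br n x y) k = 0" for k
  proof (cases "k = 2*n")
    case True
    then show ?thesis
      unfolding ext_br_br heis_omega_ext_br
      using heis_omega_antisym[of n x z] heis_omega_antisym[of n y x] heis_omega_antisym[of n z y]
      by (simp add: ext_br_app) (simp add: algebra_simps)
  qed (simp add: ext_br_br ext_br_app algebra_simps)
  then show "vadd (vadd (ext_br n x (ext_br n y z)) (ext_br n y (ext_br n z x))) (ext_br n z (ext_br n x y)) = zvec"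
    by (simp add: vadd_def zvec_def fun_eq_iff)
qed

lemma derived_algebra_ext: "brspan (2*n+2) (ext_C n) (vsp (2*n+2)) (vsp (2*n+2)) = vsp (2*n+1)"
proof
  show "brspan (2*n+2) (ext_C n) (vsp (2*n+2)) (vsp (2*n+2)) \<subseteq> vsp (2*n+1)"
  proof
    fix v assume v: "v \<in> brspan (2*n+2) (ext_C n) (vsp (2*n+2)) (vsp (2*n+2))"
    have "v k = 0" if "k \<ge> 2*n+1" for k
      by (rule brspan_coord_zero[OF v]) (simp only: lbr_ext, use that in \<open>simp add: ext_br_app\<close>)
    then show "v \<in> vsp (2*n+1)" by (simp add: vsp_def)
  qed
next
  show "vsp (2*n+1) \<subseteq> brspan (2*n+2) (ext_C n) (vsp (2*n+2)) (vsp (2*n+2))"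
  proof
    fix v assume v: "v \<in> vsp (2*n+1)"
    txt \<open>\<open>ad H = heis_D\<close> is invertible on the Heisenberg algebra, so \<open>v = [H, heis_D\<^sup>-\<^sup>1 v]\<close>.\<close>
    define u where "u = (\<lambda>k. if k < 2*n then 2 * v k else if k = 2*n then v k else 0)"
    have "v = ext_br n (ev (2*n+1)) u"
      using v by (auto simp: ext_br_app u_def heis_omega_ev_outside vsp_def fun_eq_iff)
    then have "v = (\<lambda>k. \<Sum>i<1::nat. lbr (2*n+2) (ext_C n) (ev (2*n+1)) u k)"
      unfolding lbr_ext by simp
    moreover have "u \<in> vsp (2*n+2)" "ev (2*n+1) \<in> vsp (2*n+2)"
      by (simp_all add: u_def vsp_def ev_vsp)
    ultimately show "v \<in> brspan (2*n+2) (ext_C n) (vsp (2*n+2)) (vsp (2*n+2))"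
      unfolding brspan_def mem_Collect_eq
      by (intro exI[of _ 1] exI[of _ "\<lambda>_. ev (2*n+1)"] exI[of _ "\<lambda>_. u"]) simp
  qed
qed

lemma solvable_ext: "solvable_la (2*n+2) (ext_C n)"
proof -
  have dsr1: "dsr (2*n+2) (ext_C n) 1 = vsp (2*n+1)"
    using derived_algebra_ext by simp
  have dsr2: "v k = 0" if "v \<in> dsr (2*n+2) (ext_C n) 2" "k \<noteq> 2*n" for v k
  proof (rule brspan_coord_zero[of v])
    show "v \<in> brspan (2*n+2) (ext_C n) (vsp (2*n+1)) (vsp (2*n+1))"
      using that(1) dsr1 by (simp add: numeral_2_eq_2)
  qed (simp only: lbr_ext, use that(2) in \<open>simp add: ext_br_app vsp_def\<close>)
  have "v k = 0" if "v \<in> dsr (2*n+2) (ext_C n) 3" for v k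
  proof (rule brspan_coord_zero[of v])
    show "v \<in> brspan (2*n+2) (ext_C n) (dsr (2*n+2) (ext_C n) 2) (dsr (2*n+2) (ext_C n) 2)"
      using that by (simp add: numeral_3_eq_3 numeral_2_eq_2)
  next
    fix a b assume "a \<in> dsr (2*n+2) (ext_C n) 2" "b \<in> dsr (2*n+2) (ext_C n) 2"
    then have "\<And>j. j \<noteq> 2*n \<Longrightarrow> a j = 0" "\<And>j. j \<noteq> 2*n \<Longrightarrow> b j = 0"
      using dsr2 by blast+
    then show "lbr (2*n+2) (ext_C n) a b k = 0"
      unfolding lbr_ext by (simp add: ext_br_app heis_omega_zero_left)
  qed
  then have "dsr (2*n+2) (ext_C n) 3 = {zvec}"
    using zvec_in_brspan by (auto simp: numeral_3_eq_3 zvec_def)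
  then show ?thesis unfolding solvable_la_def by blast
qed

lemma orthogonal_complement_ext:
  "{x \<in> vsp (2*n+2). \<forall>y\<in>{v \<in> vsp (2*n+2). \<forall>k<2*n+1. v k = 0}. bil (2*n+2) (ext_g n) x y = 0}
   = vsp (2*n+1)" (is "?orth = _")
proof
  show "?orth \<subseteq> vsp (2*n+1)"
  proof
    fix x assume x: "x \<in> ?orth"
    have "ev (2*n+1) \<in> {v \<in> vsp (2*n+2). \<forall>k<2*n+1. v k = 0}" by (simp add: ev_vsp)
    then have "bil (2*n+2) (ext_g n) x (ev (2*n+1)) = 0" using x by blast
    moreover have "heis_inner n x (ev (2*n+1)) = 0"
      by (subst heis_inner_sym) (simp add: heis_inner_ev_outside)
    ultimately have "x (2*n+1) = 0" unfolding bil_ext by simp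
    moreover have "x k = 0" if "k \<ge> 2*n+2" for k using x that by (simp add: vsp_def)
    ultimately have "x k = 0" if "k \<ge> 2*n+1" for k
      using that by (cases "k = 2*n+1") auto
    then show "x \<in> vsp (2*n+1)" by (simp add: vsp_def)
  qed
next
  show "vsp (2*n+1) \<subseteq> ?orth"
  proof
    fix x assume x: "x \<in> vsp (2*n+1)"
    have "bil (2*n+2) (ext_g n) x y = 0" if y: "y \<in> vsp (2*n+2)" "\<forall>k<2*n+1. y k = 0" for y
    proof -
      have "heis_inner n x y = 0"
        by (subst heis_inner_sym, rule heis_inner_zero_left) (use y in simp)
      then show ?thesis unfolding bil_ext using x y by (simp add: vsp_def)
    qed
    then show "x \<in> ?orth" using x by (simp add: vsp_def)
  qed
qed

definition heis_D_form :: "nat \<Rightarrow> vec \<Rightarrow> vec \<Rightarrow> real" where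
  "heis_D_form n X Y = heis_inner n X Y / 2 - X (2*n) * Y (2*n)"

text \<open>\<open>\<nabla>\<^sub>X Y\<close> is the Heisenberg connection, corrected by \<open>- g(D X, Y) H - Y\<^sub>H D X\<close>,
  where \<open>D = heis_D\<close> and \<open>g(D X, Y) = heis_D_form n X Y\<close>.\<close>
definition ext_nabla :: "nat \<Rightarrow> vec \<Rightarrow> vec \<Rightarrow> vec" where
  "ext_nabla n X Y = (\<lambda>k. (if k = 2*n then heis_omega n X Y / 2 else 0)
     + (if k < 2*n then X (2*n) * heis_J n Y k / 2 + Y (2*n) * heis_J n X k / 2 else 0)
     - (if k = 2*n+1 then heis_D_form n X Y else 0) - Y (2*n+1) * heis_D n k * X k)"

lemma ext_nabla_app:
  "ext_nabla n X Y k = (if k = 2*n then heis_omega n X Y / 2 else 0)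
     + (if k < 2*n then X (2*n) * heis_J n Y k / 2 + Y (2*n) * heis_J n X k / 2 else 0)
     - (if k = 2*n+1 then heis_D_form n X Y else 0) - Y (2*n+1) * heis_D n k * X k"
  by (simp add: ext_nabla_def)

lemma ext_nabla_vsp: "ext_nabla n X Y \<in> vsp (2*n+2)"
  by (simp add: vsp_def ext_nabla_app)

lemma nabla_ext:
  assumes "X \<in> vsp (2*n+2)" "Y \<in> vsp (2*n+2)"
  shows "nabla (2*n+2) (ext_C n) (ext_g n) X Y = ext_nabla n X Y"
proof (rule nabla_eqI[OF pseudo_inner_ext ext_nabla_vsp])
  fix Z
  have inner_br: "heis_inner n (ext_br n U V) W =
    U (2*n+1) / 2 * heis_inner n V W + (- V (2*n+1) / 2) * heis_inner n U W + 0 * heis_inner n U W"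
    for U V W
  proof -
    have "heis_inner n (ext_br n U V) W =
      heis_inner n (\<lambda>k. U (2*n+1) / 2 * V k + (- V (2*n+1) / 2) * U k + 0 * U k) W"
      by (rule heis_inner_cong) (auto simp: ext_br_app)
    then show ?thesis by (simp only: heis_inner_linear_left)
  qed
  have inner_nabla: "heis_inner n (ext_nabla n X Y) Z = X (2*n) / 2 * heis_omega n Y Z
    + Y (2*n) / 2 * heis_omega n X Z + (- Y (2*n+1) / 2) * heis_inner n X Z"
  proof -
    have "heis_inner n (ext_nabla n X Y) Z = heis_inner n (\<lambda>k. X (2*n) / 2 * heis_J n Y k
        + Y (2*n) / 2 * heis_J n X k + (- Y (2*n+1) / 2) * X k) Z"
      by (rule heis_inner_cong) (auto simp: ext_nabla_app)
    then show ?thesis by (simp only: heis_inner_linear_left heis_inner_J_left)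
  qed
  show "2 * bil (2*n+2) (ext_g n) (ext_nabla n X Y) Z =
     bil (2*n+2) (ext_g n) (lbr (2*n+2) (ext_C n) X Y) Z -
     bil (2*n+2) (ext_g n) (lbr (2*n+2) (ext_C n) Y Z) X +
     bil (2*n+2) (ext_g n) (lbr (2*n+2) (ext_C n) Z X) Y"
    unfolding bil_ext lbr_ext inner_br inner_nabla ext_br_H
    using heis_omega_antisym[of n Z X] heis_omega_antisym[of n Z Y] heis_omega_antisym[of n Y X]
      heis_inner_sym[of n Z X] heis_inner_sym[of n Z Y] heis_inner_sym[of n Y X]
    by (simp add: ext_br_app ext_nabla_app heis_D_form_def) (simp add: algebra_simps)
qed

lemma heis_D_form_ev:
  "i < n \<Longrightarrow> heis_D_form n (ev i) Y = Y i / 2"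
  "i < n \<Longrightarrow> heis_D_form n (ev (i+n)) Y = Y (i+n) / 2"
  "heis_D_form n (ev (2*n)) Y = - Y (2*n)"
  "heis_D_form n (ev (Suc (2*n))) Y = 0"
  by (simp_all add: heis_D_form_def heis_inner_ev_low heis_inner_ev_high heis_inner_ev_outside)

lemma heis_omega_ext_nabla_centre: "heis_omega n X (ext_nabla n (ev (2*n)) Y) = heis_inner n X Y / 2"
proof -
  have "heis_omega n X (ext_nabla n (ev (2*n)) Y) = heis_omega n X (\<lambda>k. 1/2 * heis_J n Y k)"
    by (rule heis_omega_cong) (auto simp: ext_nabla_app heis_J_def)
  also have "\<dots> = 1/2 * heis_inner n X Y"
    by (simp only: heis_omega_scale_right heis_omega_J_right)
  finally show ?thesis by simp
qed

lemma heis_D_form_ext_nabla_H: "heis_D_form n X (ext_nabla n (ev (Suc (2*n))) Y) = 0"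
proof -
  have "heis_inner n (ext_nabla n (ev (Suc (2*n))) Y) X = 0"
    by (rule heis_inner_zero_left) (auto simp: ext_nabla_app heis_J_def)
  then show ?thesis
    by (simp add: heis_D_form_def heis_inner_sym ext_nabla_app heis_omega_ev_outside)
qed

lemma heis_omega_ext_br_centre: "heis_omega n (ext_br n (ev (2*n)) X) Y = 0"
  by (rule heis_omega_zero_left) (simp add: ext_br_app)

lemma heis_D_form_ext_br_H:
  "heis_D_form n (ext_br n (ev (Suc (2*n))) X) Y = heis_inner n X Y / 4 - X (2*n) * Y (2*n)"
proof -
  have "heis_inner n (ext_br n (ev (Suc (2*n))) X) Y = heis_inner n (\<lambda>k. 1/2 * X k) Y"
    by (rule heis_inner_cong) (auto simp: ext_br_app)
  also have "\<dots> = 1/2 * heis_inner n X Y"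
    by (simp only: heis_inner_scale_left)
  finally show ?thesis
    by (simp add: heis_D_form_def heis_inner_scale_left ext_br_app heis_omega_ev_outside)
qed

definition ext_ricci_summand :: "nat \<Rightarrow> vec \<Rightarrow> vec \<Rightarrow> nat \<Rightarrow> real" where
  "ext_ricci_summand n X Y k = ext_nabla n (ev k) (ext_nabla n X Y) k
     - ext_nabla n X (ext_nabla n (ev k) Y) k - ext_nabla n (ext_br n (ev k) X) Y k"

lemmas ext_ricci_simps = ext_nabla_app ext_br_app heis_D_form_ev heis_omega_ext_nabla_centre
  heis_D_form_ext_nabla_H heis_omega_ext_br_centre heis_D_form_ext_br_H
  heis_omega_ev_low heis_omega_ev_high heis_omega_ev_outside

lemma ext_ricci_summand_eq:
  "i < n \<Longrightarrow> ext_ricci_summand n X Y i + ext_ricci_summand n X Y (i+n) =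
    heis_D_form n X Y + X (2*n) * Y (2*n) / 2 - X (2*n+1) * Y (2*n+1) / 2
    + (X i * Y i + X (i+n) * Y (i+n)) / 2"
  "ext_ricci_summand n X Y (2*n) =
    heis_D_form n X Y - heis_inner n X Y / 4 + X (2*n) * Y (2*n) - X (2*n+1) * Y (2*n+1)"
  "ext_ricci_summand n X Y (2*n+1) = heis_inner n X Y / 4 - X (2*n) * Y (2*n)"
  unfolding ext_ricci_summand_def by (simp_all add: ext_ricci_simps)

lemma ricci_ext:
  assumes X: "X \<in> vsp (2*n+2)" and Y: "Y \<in> vsp (2*n+2)"
  shows "ricci (2*n+2) (ext_C n) (ext_g n) X Y = (real n + 2) / 2 * bil (2*n+2) (ext_g n) X Y"
proof -
  have "ricci (2*n+2) (ext_C n) (ext_g n) X Y = (\<Sum>k<2*n+2. ext_ricci_summand n X Y k)"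
    using ricci_via_connection[OF nabla_ext ext_nabla_vsp X Y]
    unfolding lbr_ext ext_ricci_summand_def .
  also have "\<dots> = (\<Sum>i<n. ext_ricci_summand n X Y i + ext_ricci_summand n X Y (i+n))
      + ext_ricci_summand n X Y (2*n) + ext_ricci_summand n X Y (2*n+1)"
    by (simp add: add_2_eq_Suc' sum_lessThan_double)
  also have "\<dots> = n * (heis_D_form n X Y + X (2*n) * Y (2*n) / 2 - X (2*n+1) * Y (2*n+1) / 2)
      + heis_inner n X Y / 2 + ext_ricci_summand n X Y (2*n) + ext_ricci_summand n X Y (2*n+1)"
    by (simp add: ext_ricci_summand_eq(1) sum.distrib heis_inner_def flip: sum_divide_distrib)
  also have "\<dots> = (real n + 2) / 2 * bil (2*n+2) (ext_g n) X Y"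
    unfolding ext_ricci_summand_eq(2,3) bil_ext heis_D_form_def by (simp add: field_simps)
  finally show ?thesis .
qed

theorem mainTheorem2:
  fixes n :: nat
  assumes "1 \<le> n"
  shows "nilsoliton (2 * n + 1) (heis_C n) (heis_g2 n) \<and>
         (\<exists>m C' G'. metric_solvable_extension (2 * n + 1) (heis_C n) (heis_g2 n) m C' G' \<and>
                     einstein (2 * n + 1 + m) C' G')"
proof
  show "nilsoliton (2 * n + 1) (heis_C n) (heis_g2 n)"
    by (rule nilsoliton_heis)
  have dim: "2 * n + 1 + 1 = 2 * n + 2" by simp
  have "metric_solvable_extension (2 * n + 1) (heis_C n) (heis_g2 n) 1 (ext_C n) (ext_g n)"
    unfolding metric_solvable_extension_def dim
    using lie_algebra_ext solvable_ext pseudo_inner_ext derived_algebra_ext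
      orthogonal_complement_ext lbr_ext_restrict bil_ext_restrict by blast
  moreover have "einstein (2 * n + 1 + 1) (ext_C n) (ext_g n)"
    unfolding einstein_def dim using ricci_ext by blast
  ultimately show "\<exists>m C' G'. metric_solvable_extension (2 * n + 1) (heis_C n) (heis_g2 n) m C' G' \<and>
                     einstein (2 * n + 1 + m) C' G'"
    by blast
qed

end
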